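(* In the Gaussian sequential learning model with binary states described in the context, for any privacy budget $\varepsilon\in(0,\infty)$, asymptotic learning occurs under the smooth randomized response strategy, i.e., $\lim_{n\to\infty}\mathbb{P}(a_n=\theta)=1$.
   Context: Gaussian model: unknown state $\theta\in\{-1,+1\}$ with uniform prior; agents $n=1,2,\dots$ act in sequence; agent $n$ privately observes $s_n\sim\mathcal{N}(\theta,\sigma^2)$, i.i.d. given $\theta$, $\sigma>0$. The public log-likelihood ratio is $l_n=\log\frac{\mathbb{P}(\theta=+1\mid x_1,\dots,x_{n-1})}{\mathbb{P}(\theta=-1\mid x_1,\dots,x_{n-1})}$ ($l_1=0$), where $x_i$ are reported actions. With $t(l)=-\sigma^2l/2$, agent $n$'s intended action is $a_n=+1$ if $s_n>t(l_n)$ and $a_n=-1$ otherwise. Under the smooth randomized response strategy with budget $\varepsilon$, the agent reports $x_n=a_n$ with probability $1-u_n(s_n)$ and $x_n=-a_n$ with probability $u_n(s_n)=\frac12e^{-\varepsilon|s_n-t(l_n)|}$; the public updates $l_{n+1}=l_n+\log\frac{\mathbb{P}(x_n\mid l_n,\theta=+1)}{\mathbb{P}(x_n\mid l_n,\theta=-1)}$ by Bayes' rule. Asymptotic learning means $\lim_{n\to\infty}\mathbb{P}(a_n=\theta)=1$. *)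

theory Defs
  imports "HOL-Probability.Probability"
begin

text \<open>Gaussian sequential learning with smooth randomized response.
  States theta are the reals 1 and -1; a report x = +1 is encoded as True, x = -1 as False.\<close>

definition thr :: "real \<Rightarrow> real \<Rightarrow> real" where
  "thr \<sigma> l = - (\<sigma>\<^sup>2 * l) / 2"

definition flip_prob :: "real \<Rightarrow> real \<Rightarrow> real \<Rightarrow> real \<Rightarrow> real" where
  "flip_prob \<sigma> \<epsilon> l s = exp (- \<epsilon> * \<bar>s - thr \<sigma> l\<bar>) / 2"

definition signal_dist :: "real \<Rightarrow> real \<Rightarrow> real measure" where
  "signal_dist \<sigma> \<theta> = density lborel (normal_density \<theta> \<sigma>)"

definition intended :: "real \<Rightarrow> real \<Rightarrow> real \<Rightarrow> bool" where
  "intended \<sigma> l s \<longleftrightarrow> s > thr \<sigma> l"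

definition report_plus_prob :: "real \<Rightarrow> real \<Rightarrow> real \<Rightarrow> real \<Rightarrow> real" where
  "report_plus_prob \<sigma> \<epsilon> \<theta> l =
     (\<integral>s. (if intended \<sigma> l s then 1 - flip_prob \<sigma> \<epsilon> l s else flip_prob \<sigma> \<epsilon> l s)
        \<partial>signal_dist \<sigma> \<theta>)"

definition report_prob :: "real \<Rightarrow> real \<Rightarrow> real \<Rightarrow> real \<Rightarrow> bool \<Rightarrow> real" where
  "report_prob \<sigma> \<epsilon> \<theta> l x =
     (if x then report_plus_prob \<sigma> \<epsilon> \<theta> l else 1 - report_plus_prob \<sigma> \<epsilon> \<theta> l)"

definition llr_update :: "real \<Rightarrow> real \<Rightarrow> real \<Rightarrow> bool \<Rightarrow> real" where
  "llr_update \<sigma> \<epsilon> l x = l + ln (report_prob \<sigma> \<epsilon> 1 l x / report_prob \<sigma> \<epsilon> (-1) l x)"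

definition public_llr :: "real \<Rightarrow> real \<Rightarrow> bool list \<Rightarrow> real" where
  "public_llr \<sigma> \<epsilon> xs = foldl (llr_update \<sigma> \<epsilon>) 0 xs"

primrec history :: "real \<Rightarrow> real \<Rightarrow> real \<Rightarrow> nat \<Rightarrow> bool list pmf" where
  "history \<sigma> \<epsilon> \<theta> 0 = return_pmf []"
| "history \<sigma> \<epsilon> \<theta> (Suc k) =
     bind_pmf (history \<sigma> \<epsilon> \<theta> k)
       (\<lambda>xs. map_pmf (\<lambda>b. xs @ [b])
               (bernoulli_pmf (report_plus_prob \<sigma> \<epsilon> \<theta> (public_llr \<sigma> \<epsilon> xs))))"

text \<open>P(a_n = theta) for agent n = k + 1, with uniform prior on theta in {-1,+1}:
  conditional on theta, the agent's signal s_n is independent of the history x_1..x_{n-1}.\<close>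
definition prob_correct :: "real \<Rightarrow> real \<Rightarrow> nat \<Rightarrow> real" where
  "prob_correct \<sigma> \<epsilon> k =
     (1/2) * measure_pmf.expectation (history \<sigma> \<epsilon> 1 k)
               (\<lambda>xs. measure (signal_dist \<sigma> 1) {s. intended \<sigma> (public_llr \<sigma> \<epsilon> xs) s})
   + (1/2) * measure_pmf.expectation (history \<sigma> \<epsilon> (-1) k)
               (\<lambda>xs. measure (signal_dist \<sigma> (-1)) {s. \<not> intended \<sigma> (public_llr \<sigma> \<epsilon> xs) s})"

end

theory Submission
  imports Defs
begin

text \<open>
  Let w1 and w0 be the laws of the first n reports under theta = 1 and theta = -1; then
  w1(xs) = exp l * w0(xs), where l is the public LLR after xs. The agent's threshold rule is
  the Bayes test between N(1, sigma^2) and N(-1, sigma^2) with prior odds exp l, so its error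
  probability is at most half of the Bhattacharyya coefficient B n = sum of sqrt (w1 * w0).
  Each further report multiplies the contribution of a history by the Bhattacharyya coefficient of
  two Bernoulli laws with parameters p and q, which is at most 1 - (p - q)^2 / 8, and smooth randomized
  response keeps p - q bounded away from 0 as long as |l| <= M. Hence the part of B n coming
  from histories with |l| <= M is summable in n, while the histories with |l| > M contribute at
  most 2 exp (- M / 2). So B n tends to 0 and the agents learn.
\<close>

section \<open>Elementary inequalities and sums over report histories\<close>

lemma bernoulli_affinity_le:
  fixes p q :: real
  assumes "0 \<le> p" "p \<le> 1" "0 \<le> q" "q \<le> 1"
  shows "sqrt (p * q) + sqrt ((1 - p) * (1 - q)) \<le> 1 - (p - q)\<^sup>2 / 8"
proof -
  define a b c d where "a = sqrt p" "b = sqrt q" "c = sqrt (1 - p)" "d = sqrt (1 - q)"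
  have squares: "a\<^sup>2 = p" "b\<^sup>2 = q" "c\<^sup>2 = 1 - p" "d\<^sup>2 = 1 - q"
    using assms by (simp_all add: a_b_c_d_def)
  have "(a - b)\<^sup>2 + (c - d)\<^sup>2 = (a\<^sup>2 + c\<^sup>2) + (b\<^sup>2 + d\<^sup>2) - 2 * (a * b + c * d)"
    by (simp add: power2_eq_square algebra_simps)
  then have "a * b + c * d = 1 - ((a - b)\<^sup>2 + (c - d)\<^sup>2) / 2"
    using squares by (simp add: field_simps)
  then have affinity: "sqrt (p * q) + sqrt ((1 - p) * (1 - q)) = 1 - ((a - b)\<^sup>2 + (c - d)\<^sup>2) / 2"
    by (simp add: a_b_c_d_def real_sqrt_mult)
  have "0 \<le> a" "0 \<le> b" "a \<le> 1" "b \<le> 1"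
    using assms by (simp_all add: a_b_c_d_def)
  then have "(a + b)\<^sup>2 \<le> 2\<^sup>2"
    by (intro power_mono) auto
  have "(p - q)\<^sup>2 = (a - b)\<^sup>2 * (a + b)\<^sup>2"
    unfolding squares[symmetric] by (simp add: power2_eq_square algebra_simps)
  also have "\<dots> \<le> (a - b)\<^sup>2 * 4"
    using \<open>(a + b)\<^sup>2 \<le> 2\<^sup>2\<close> by (intro mult_left_mono) auto
  finally have "(p - q)\<^sup>2 / 8 \<le> ((a - b)\<^sup>2 + (c - d)\<^sup>2) / 2"
    by (simp add: add_increasing2)
  then show ?thesis
    unfolding affinity by simp
qed

lemma min_le_sqrt_mult:
  fixes v w :: real
  assumes "0 \<le> v" and "0 \<le> w"
  shows "min v w \<le> sqrt (v * w)"
proof -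
  have "min v w = sqrt (min v w * min v w)"
    using assms by simp
  also have "\<dots> \<le> sqrt (v * w)"
    using assms by (intro real_sqrt_le_mono mult_mono) auto
  finally show ?thesis .
qed

lemma sqrt_mult_likelihood_ratio:
  fixes v w l :: real
  assumes "0 \<le> w" and "v = exp l * w"
  shows "sqrt (v * w) = exp (l / 2) * w"
proof -
  have "v * w = (exp (l / 2) * w)\<^sup>2"
    using assms(2) by (simp add: power2_eq_square exp_add[symmetric])
  then show ?thesis
    using assms(1) by simp
qed

lemma sqrt_mult_le_exp_abs:
  fixes v w l :: real
  assumes "0 \<le> w" and "v = exp l * w"
  shows "sqrt (v * w) \<le> exp (- \<bar>l\<bar> / 2) * (v + w)"
proof (cases "l \<ge> 0")
  case True
  have "sqrt (v * w) = exp (- l / 2) * v"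
    using sqrt_mult_likelihood_ratio[OF assms] assms(2) by (simp add: exp_add[symmetric])
  then show ?thesis
    using True assms by (simp add: distrib_left)
next
  case False
  then show ?thesis
    using sqrt_mult_likelihood_ratio[OF assms] assms by (simp add: distrib_left)
qed

lemma finite_bool_lists_length [simp]: "finite {xs :: bool list. length xs = n}"
  using finite_lists_length_eq[of "UNIV :: bool set" n] by simp

lemma sum_bool_lists_length_Suc:
  "(\<Sum>ys | length ys = Suc n. f ys) = (\<Sum>xs | length xs = n. f (xs @ [True]) + f (xs @ [False]))"
proof -
  have "{ys :: bool list. length ys = Suc n} = (\<lambda>(xs, b). xs @ [b]) ` ({xs. length xs = n} \<times> UNIV)"
    by (auto simp: image_iff) (metis append_butlast_last_id length_butlast list.size(3) diff_Suc_1 nat.distinct(1))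
  moreover have "inj_on (\<lambda>(xs, b :: bool). xs @ [b]) ({xs. length xs = n} \<times> UNIV)"
    by (auto simp: inj_on_def)
  ultimately have "(\<Sum>ys | length ys = Suc n. f ys) = (\<Sum>(xs, b)\<in>{xs. length xs = n} \<times> UNIV. f (xs @ [b]))"
    by (simp add: sum.reindex case_prod_unfold)
  also have "\<dots> = (\<Sum>xs | length xs = n. \<Sum>b\<in>UNIV. f (xs @ [b]))"
    by (rule sum.cartesian_product[symmetric])
  finally show ?thesis
    by (simp add: UNIV_bool add.commute)
qed

section \<open>Private signals and the report kernel\<close>

lemma prob_space_signal_dist: "\<sigma> > 0 \<Longrightarrow> prob_space (signal_dist \<sigma> \<theta>)"
  unfolding signal_dist_def by (rule prob_space_normal_density)

lemma sets_signal_dist [simp, measurable_cong]: "sets (signal_dist \<sigma> \<theta>) = sets borel"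
  unfolding signal_dist_def by simp

lemma space_signal_dist: "space (signal_dist \<sigma> \<theta>) = UNIV"
  unfolding signal_dist_def by simp

lemma integral_signal_dist:
  assumes "\<sigma> > 0" and [measurable]: "f \<in> borel_measurable borel"
  shows "(\<integral>s. f s \<partial>signal_dist \<sigma> \<theta>) = (\<integral>s. normal_density \<theta> \<sigma> s * f s \<partial>lborel)"
  unfolding signal_dist_def by (subst integral_density) auto

lemma measure_signal_dist:
  assumes "\<sigma> > 0" and [measurable]: "A \<in> sets borel"
  shows "measure (signal_dist \<sigma> \<theta>) A = (\<integral>s. normal_density \<theta> \<sigma> s * indicator A s \<partial>lborel)"
  using integral_signal_dist[OF assms(1), of "indicator A" \<theta>] by simp

lemma integrable_normal_density_times_bounded:
  assumes "\<sigma> > 0" and [measurable]: "f \<in> borel_measurable borel" and "\<And>s. \<bar>f s\<bar> \<le> 1"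
  shows "integrable lborel (\<lambda>s. normal_density \<theta> \<sigma> s * f s)"
proof -
  interpret prob_space "signal_dist \<sigma> \<theta>"
    using assms(1) by (rule prob_space_signal_dist)
  have "integrable (signal_dist \<sigma> \<theta>) f"
    by (rule integrable_const_bound[where B = 1]) (use assms(3) in auto)
  then show ?thesis
    unfolding signal_dist_def by (subst (asm) integrable_density) auto
qed

lemma normal_density_shift: "normal_density 1 \<sigma> (x + 2) = normal_density (-1) \<sigma> x"
  unfolding normal_density_def by (simp add: add.commute)

lemma normal_density_likelihood_ratio:
  "normal_density 1 \<sigma> x = exp (2 * x / \<sigma>\<^sup>2) * normal_density (-1) \<sigma> x"
proof -
  have "- ((x - 1)\<^sup>2) / (2 * \<sigma>\<^sup>2) = 2 * x / \<sigma>\<^sup>2 + - ((x - (-1))\<^sup>2) / (2 * \<sigma>\<^sup>2)"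
    by (cases "\<sigma> = 0") (simp_all add: field_simps power2_eq_square)
  then show ?thesis
    unfolding normal_density_def by (simp add: exp_add[symmetric])
qed

lemma normal_density_ge:
  assumes "\<sigma> > 0" and "\<bar>x - \<mu>\<bar> \<le> c"
  shows "normal_density 0 \<sigma> c \<le> normal_density \<mu> \<sigma> x"
proof -
  have "(x - \<mu>)\<^sup>2 \<le> c\<^sup>2"
    using assms(2) by (metis abs_ge_zero abs_le_square_iff abs_of_nonneg order_trans)
  then have "- (c\<^sup>2) / (2 * \<sigma>\<^sup>2) \<le> - ((x - \<mu>)\<^sup>2) / (2 * \<sigma>\<^sup>2)"
    using assms(1) by (intro divide_right_mono) auto
  then show ?thesis
    unfolding normal_density_def using assms(1) by (simp add: divide_right_mono)
qed

definition report_plus_kernel :: "real \<Rightarrow> real \<Rightarrow> real \<Rightarrow> real \<Rightarrow> real" where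
  "report_plus_kernel \<sigma> \<epsilon> l s =
     (if intended \<sigma> l s then 1 - flip_prob \<sigma> \<epsilon> l s else flip_prob \<sigma> \<epsilon> l s)"

lemma borel_measurable_report_plus_kernel [measurable]:
  "report_plus_kernel \<sigma> \<epsilon> l \<in> borel_measurable borel"
  unfolding report_plus_kernel_def flip_prob_def intended_def by measurable

lemma report_plus_prob_eq_integral:
  "report_plus_prob \<sigma> \<epsilon> \<theta> l = (\<integral>s. report_plus_kernel \<sigma> \<epsilon> l s \<partial>signal_dist \<sigma> \<theta>)"
  unfolding report_plus_prob_def report_plus_kernel_def ..

lemma flip_prob_pos: "0 < flip_prob \<sigma> \<epsilon> l s"
  unfolding flip_prob_def by simp

lemma flip_prob_le:
  assumes "\<epsilon> \<ge> 0" and "c \<le> \<bar>s - thr \<sigma> l\<bar>"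
  shows "flip_prob \<sigma> \<epsilon> l s \<le> exp (- \<epsilon> * c) / 2"
  unfolding flip_prob_def using assms by (simp add: mult_left_mono)

lemma flip_prob_le_half: "\<epsilon> \<ge> 0 \<Longrightarrow> flip_prob \<sigma> \<epsilon> l s \<le> 1 / 2"
  using flip_prob_le[of \<epsilon> 0] by simp

lemma report_plus_kernel_bounds:
  "\<epsilon> \<ge> 0 \<Longrightarrow> 0 < report_plus_kernel \<sigma> \<epsilon> l s \<and> report_plus_kernel \<sigma> \<epsilon> l s < 1"
  using flip_prob_pos[of \<sigma> \<epsilon> l s] flip_prob_le_half[of \<epsilon> \<sigma> l s]
  unfolding report_plus_kernel_def by auto

lemma mono_report_plus_kernel:
  assumes "\<epsilon> \<ge> 0"
  shows "mono (report_plus_kernel \<sigma> \<epsilon> l)"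
proof (rule monoI)
  fix x y :: real
  assume "x \<le> y"
  let ?t = "thr \<sigma> l"
  consider "y \<le> ?t" | "x \<le> ?t" "?t < y" | "?t < x"
    using \<open>x \<le> y\<close> by linarith
  then show "report_plus_kernel \<sigma> \<epsilon> l x \<le> report_plus_kernel \<sigma> \<epsilon> l y"
  proof cases
    case 1
    then have "\<epsilon> * \<bar>y - ?t\<bar> \<le> \<epsilon> * \<bar>x - ?t\<bar>"
      using \<open>x \<le> y\<close> assms by (intro mult_left_mono) auto
    then show ?thesis
      using 1 \<open>x \<le> y\<close> unfolding report_plus_kernel_def intended_def flip_prob_def by simp
  next
    case 2
    then show ?thesis
      using flip_prob_le_half[OF assms, of \<sigma> l x] flip_prob_le_half[OF assms, of \<sigma> l y]
      unfolding report_plus_kernel_def intended_def by simp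
  next
    case 3
    then have "\<epsilon> * \<bar>x - ?t\<bar> \<le> \<epsilon> * \<bar>y - ?t\<bar>"
      using \<open>x \<le> y\<close> assms by (intro mult_left_mono) auto
    then show ?thesis
      using 3 \<open>x \<le> y\<close> unfolding report_plus_kernel_def intended_def flip_prob_def by simp
  qed
qed

lemma report_plus_kernel_jump:
  assumes "\<epsilon> \<ge> 0" and "thr \<sigma> l - 2 < x" and "x \<le> thr \<sigma> l - 1"
  shows "(1 - exp (- \<epsilon>)) / 2 \<le> report_plus_kernel \<sigma> \<epsilon> l (x + 2) - report_plus_kernel \<sigma> \<epsilon> l x"
proof -
  have "1 / 2 \<le> report_plus_kernel \<sigma> \<epsilon> l (x + 2)"
    using assms flip_prob_le_half[OF assms(1)] unfolding report_plus_kernel_def intended_def by simp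
  moreover have "report_plus_kernel \<sigma> \<epsilon> l x \<le> exp (- \<epsilon> * 1) / 2"
    using assms flip_prob_le[OF assms(1), of 1 x] unfolding report_plus_kernel_def intended_def by simp
  ultimately show ?thesis by simp
qed

lemma report_plus_prob_bounds:
  assumes "\<sigma> > 0" and "\<epsilon> \<ge> 0"
  shows "0 < report_plus_prob \<sigma> \<epsilon> \<theta> l \<and> report_plus_prob \<sigma> \<epsilon> \<theta> l < 1"
proof -
  interpret prob_space "signal_dist \<sigma> \<theta>"
    using assms(1) by (rule prob_space_signal_dist)
  note bounds = report_plus_kernel_bounds[OF assms(2), of \<sigma> l]
  have integrable: "integrable (signal_dist \<sigma> \<theta>) (report_plus_kernel \<sigma> \<epsilon> l)"
    by (rule integrable_const_bound[where B = 1]) (use bounds in \<open>auto simp: less_imp_le\<close>)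
  have "(\<integral>s. 0 \<partial>signal_dist \<sigma> \<theta>) < (\<integral>s. report_plus_kernel \<sigma> \<epsilon> l s \<partial>signal_dist \<sigma> \<theta>)"
    by (rule integral_less_AE_space) (use bounds integrable in \<open>auto simp: emeasure_space_1\<close>)
  moreover have "(\<integral>s. report_plus_kernel \<sigma> \<epsilon> l s \<partial>signal_dist \<sigma> \<theta>) < (\<integral>s. 1 \<partial>signal_dist \<sigma> \<theta>)"
    by (rule integral_less_AE_space) (use bounds integrable in \<open>auto simp: emeasure_space_1\<close>)
  ultimately show ?thesis
    unfolding report_plus_prob_eq_integral by (simp add: prob_space)
qed

lemma report_plus_prob_diff_eq_integral:
  assumes "\<sigma> > 0" and "\<epsilon> \<ge> 0"
  shows "report_plus_prob \<sigma> \<epsilon> 1 l - report_plus_prob \<sigma> \<epsilon> (-1) l =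
    (\<integral>x. normal_density (-1) \<sigma> x *
          (report_plus_kernel \<sigma> \<epsilon> l (x + 2) - report_plus_kernel \<sigma> \<epsilon> l x) \<partial>lborel)"
proof -
  let ?k = "report_plus_kernel \<sigma> \<epsilon> l"
  have "report_plus_prob \<sigma> \<epsilon> 1 l = (\<integral>x. normal_density 1 \<sigma> (x + 2) * ?k (x + 2) \<partial>lborel)"
    unfolding report_plus_prob_eq_integral integral_signal_dist[OF assms(1) borel_measurable_report_plus_kernel]
    using lborel_integral_real_affine[where c = 1 and t = 2] by (simp add: add.commute)
  also have "\<dots> = (\<integral>x. normal_density (-1) \<sigma> x * ?k (x + 2) \<partial>lborel)"
    by (simp add: normal_density_shift)
  finally have "report_plus_prob \<sigma> \<epsilon> 1 l = \<dots>" .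
  moreover have "report_plus_prob \<sigma> \<epsilon> (-1) l = (\<integral>x. normal_density (-1) \<sigma> x * ?k x \<partial>lborel)"
    unfolding report_plus_prob_eq_integral integral_signal_dist[OF assms(1) borel_measurable_report_plus_kernel] ..
  moreover have "\<bar>?k x\<bar> \<le> 1" for x
    using report_plus_kernel_bounds[OF assms(2), of \<sigma> l x] by simp
  ultimately show ?thesis
    by (simp add: right_diff_distrib Bochner_Integration.integral_diff
        integrable_normal_density_times_bounded[OF assms(1)])
qed

text \<open>Translation by 2 carries N(-1, sigma^2) to N(1, sigma^2). The kernel is nondecreasing, and for
  signals in (t - 2, t - 1] the translation crosses the threshold t, gaining at least
  (1 - exp (- epsilon)) / 2.\<close>

lemma report_plus_prob_gap:
  assumes "\<sigma> > 0" and "\<epsilon> \<ge> 0" and "\<bar>thr \<sigma> l\<bar> \<le> T"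
  shows "normal_density 0 \<sigma> (T + 3) * ((1 - exp (- \<epsilon>)) / 2)
           \<le> report_plus_prob \<sigma> \<epsilon> 1 l - report_plus_prob \<sigma> \<epsilon> (-1) l"
proof -
  let ?k = "report_plus_kernel \<sigma> \<epsilon> l" and ?t = "thr \<sigma> l"
  let ?C = "normal_density 0 \<sigma> (T + 3) * ((1 - exp (- \<epsilon>)) / 2)"
  have "?C = (\<integral>x. ?C * indicator {?t - 2 <.. ?t - 1} x \<partial>lborel)"
    by simp
  also have "\<dots> \<le> (\<integral>x. normal_density (-1) \<sigma> x * (?k (x + 2) - ?k x) \<partial>lborel)"
  proof (rule integral_mono)
    have "\<bar>?k (x + 2) - ?k x\<bar> \<le> 1" for x
      using report_plus_kernel_bounds[OF assms(2), of \<sigma> l] by (smt (verit))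
    then show "integrable lborel (\<lambda>x. normal_density (-1) \<sigma> x * (?k (x + 2) - ?k x))"
      by (intro integrable_normal_density_times_bounded[OF assms(1)]) auto
  next
    fix x :: real
    show "?C * indicator {?t - 2 <.. ?t - 1} x \<le> normal_density (-1) \<sigma> x * (?k (x + 2) - ?k x)"
    proof (cases "x \<in> {?t - 2 <.. ?t - 1}")
      case True
      then have "normal_density 0 \<sigma> (T + 3) \<le> normal_density (-1) \<sigma> x"
        using assms(3) by (intro normal_density_ge[OF assms(1)]) auto
      moreover have "(1 - exp (- \<epsilon>)) / 2 \<le> ?k (x + 2) - ?k x"
        using True by (intro report_plus_kernel_jump[OF assms(2)]) auto
      moreover have "0 \<le> (1 - exp (- \<epsilon>)) / 2"
        using assms(2) by simp
      ultimately have "?C \<le> normal_density (-1) \<sigma> x * (?k (x + 2) - ?k x)"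
        by (intro mult_mono normal_density_nonneg)
      then show ?thesis
        using True by simp
    next
      case False
      have "?k x \<le> ?k (x + 2)"
        using mono_report_plus_kernel[OF assms(2)] by (simp add: monoD)
      then show ?thesis
        using False by simp
    qed
  qed simp
  also have "\<dots> = report_plus_prob \<sigma> \<epsilon> 1 l - report_plus_prob \<sigma> \<epsilon> (-1) l"
    using report_plus_prob_diff_eq_integral[OF assms(1,2)] by simp
  finally show ?thesis .
qed

lemma report_plus_prob_separated:
  assumes "\<sigma> > 0" and "\<epsilon> > 0"
  obtains \<kappa> where "\<kappa> > 0"
    and "\<And>l. \<bar>l\<bar> \<le> M \<Longrightarrow> \<kappa> \<le> report_plus_prob \<sigma> \<epsilon> 1 l - report_plus_prob \<sigma> \<epsilon> (-1) l"
proof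
  let ?T = "\<sigma>\<^sup>2 * M / 2"
  show "normal_density 0 \<sigma> (?T + 3) * ((1 - exp (- \<epsilon>)) / 2) > 0"
    using assms by (simp add: normal_density_def)
  fix l :: real
  assume "\<bar>l\<bar> \<le> M"
  then have "\<bar>thr \<sigma> l\<bar> \<le> ?T"
    unfolding thr_def by (simp add: abs_mult mult_left_mono)
  then show "normal_density 0 \<sigma> (?T + 3) * ((1 - exp (- \<epsilon>)) / 2)
      \<le> report_plus_prob \<sigma> \<epsilon> 1 l - report_plus_prob \<sigma> \<epsilon> (-1) l"
    using assms by (intro report_plus_prob_gap) auto
qed

section \<open>Law of the report history\<close>

lemma public_llr_Nil [simp]: "public_llr \<sigma> \<epsilon> [] = 0"
  unfolding public_llr_def by simp

lemma public_llr_snoc [simp]: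
  "public_llr \<sigma> \<epsilon> (xs @ [b]) = llr_update \<sigma> \<epsilon> (public_llr \<sigma> \<epsilon> xs) b"
  unfolding public_llr_def by simp

lemma report_prob_pos: "\<sigma> > 0 \<Longrightarrow> \<epsilon> \<ge> 0 \<Longrightarrow> 0 < report_prob \<sigma> \<epsilon> \<theta> l b"
  using report_plus_prob_bounds[of \<sigma> \<epsilon> \<theta> l] unfolding report_prob_def by auto

lemma set_pmf_history: "set_pmf (history \<sigma> \<epsilon> \<theta> n) \<subseteq> {xs. length xs = n}"
  by (induction n) auto

lemma pmf_history_snoc:
  assumes "\<sigma> > 0" and "\<epsilon> \<ge> 0"
  shows "pmf (history \<sigma> \<epsilon> \<theta> (Suc n)) (xs @ [b]) =
           pmf (history \<sigma> \<epsilon> \<theta> n) xs * report_prob \<sigma> \<epsilon> \<theta> (public_llr \<sigma> \<epsilon> xs) b"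
proof -
  let ?report = "\<lambda>ys. bernoulli_pmf (report_plus_prob \<sigma> \<epsilon> \<theta> (public_llr \<sigma> \<epsilon> ys))"
  have "pmf (history \<sigma> \<epsilon> \<theta> (Suc n)) (xs @ [b]) =
      (\<integral>ys. pmf (map_pmf (\<lambda>c. ys @ [c]) (?report ys)) (xs @ [b]) \<partial>history \<sigma> \<epsilon> \<theta> n)"
    by (simp add: pmf_bind)
  also have "\<dots> = pmf (map_pmf (\<lambda>c. xs @ [c]) (?report xs)) (xs @ [b]) * pmf (history \<sigma> \<epsilon> \<theta> n) xs"
    by (subst integral_measure_pmf_real[where A = "{xs}"]) (auto simp: pmf_eq_0_set_pmf)
  also have "\<dots> = pmf (?report xs) b * pmf (history \<sigma> \<epsilon> \<theta> n) xs"
    by (subst pmf_map_inj') (auto intro: injI)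
  finally show ?thesis
    using report_plus_prob_bounds[OF assms, of \<theta> "public_llr \<sigma> \<epsilon> xs"]
    by (cases b) (simp_all add: report_prob_def)
qed

lemma pmf_history_likelihood_ratio:
  assumes "\<sigma> > 0" and "\<epsilon> \<ge> 0"
  shows "pmf (history \<sigma> \<epsilon> 1 n) xs = exp (public_llr \<sigma> \<epsilon> xs) * pmf (history \<sigma> \<epsilon> (-1) n) xs"
proof (induction n arbitrary: xs)
  case 0
  then show ?case
    by (simp add: indicator_def)
next
  case (Suc n)
  show ?case
  proof (cases xs rule: rev_exhaust)
    case Nil
    then have "xs \<notin> set_pmf (history \<sigma> \<epsilon> \<theta> (Suc n))" for \<theta>
      using set_pmf_history by fastforce
    then show ?thesis
      by (simp add: set_pmf_eq)
  next
    case (snoc ys b)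
    let ?l = "public_llr \<sigma> \<epsilon> ys"
    have "exp (llr_update \<sigma> \<epsilon> ?l b) =
        exp ?l * (report_prob \<sigma> \<epsilon> 1 ?l b / report_prob \<sigma> \<epsilon> (-1) ?l b)"
      unfolding llr_update_def using report_prob_pos[OF assms] by (simp add: exp_add)
    then show ?thesis
      using Suc.IH[of ys] report_prob_pos[OF assms, of "-1" ?l b]
      unfolding snoc pmf_history_snoc[OF assms] by simp
  qed
qed

lemma sum_pmf_history: "(\<Sum>xs | length xs = n. pmf (history \<sigma> \<epsilon> \<theta> n) xs) = 1"
  using set_pmf_history by (intro sum_pmf_eq_1) auto

lemma expectation_history:
  "measure_pmf.expectation (history \<sigma> \<epsilon> \<theta> n) f =
     (\<Sum>xs | length xs = n. f xs * pmf (history \<sigma> \<epsilon> \<theta> n) xs)"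
  using set_pmf_history[of \<sigma> \<epsilon> \<theta> n] by (intro integral_measure_pmf_real) auto

section \<open>Bhattacharyya coefficient of the two history laws\<close>

definition history_affinity :: "real \<Rightarrow> real \<Rightarrow> real set \<Rightarrow> nat \<Rightarrow> real" where
  "history_affinity \<sigma> \<epsilon> L n =
     (\<Sum>xs | length xs = n \<and> public_llr \<sigma> \<epsilon> xs \<in> L.
        sqrt (pmf (history \<sigma> \<epsilon> 1 n) xs * pmf (history \<sigma> \<epsilon> (-1) n) xs))"

lemma history_affinity_UNIV:
  "history_affinity \<sigma> \<epsilon> UNIV n =
     (\<Sum>xs | length xs = n. sqrt (pmf (history \<sigma> \<epsilon> 1 n) xs * pmf (history \<sigma> \<epsilon> (-1) n) xs))"
  unfolding history_affinity_def by simp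

lemma history_affinity_restrict:
  "history_affinity \<sigma> \<epsilon> L n =
     (\<Sum>xs | length xs = n. if public_llr \<sigma> \<epsilon> xs \<in> L
        then sqrt (pmf (history \<sigma> \<epsilon> 1 n) xs * pmf (history \<sigma> \<epsilon> (-1) n) xs) else 0)"
  unfolding history_affinity_def by (simp add: sum.inter_filter[symmetric])

lemma history_affinity_nonneg: "0 \<le> history_affinity \<sigma> \<epsilon> L n"
  unfolding history_affinity_def by (intro sum_nonneg) simp

lemma history_affinity_0: "history_affinity \<sigma> \<epsilon> UNIV 0 = 1"
  unfolding history_affinity_UNIV by simp

lemma history_affinity_Suc_le:
  assumes "\<sigma> > 0" and "\<epsilon> \<ge> 0" and "\<kappa> \<ge> 0"
    and separated: "\<And>l. l \<in> L \<Longrightarrow> \<kappa> \<le> report_plus_prob \<sigma> \<epsilon> 1 l - report_plus_prob \<sigma> \<epsilon> (-1) l"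
  shows "history_affinity \<sigma> \<epsilon> UNIV (Suc n)
           \<le> history_affinity \<sigma> \<epsilon> UNIV n - \<kappa>\<^sup>2 / 8 * history_affinity \<sigma> \<epsilon> L n"
proof -
  let ?w = "\<lambda>xs. sqrt (pmf (history \<sigma> \<epsilon> 1 n) xs * pmf (history \<sigma> \<epsilon> (-1) n) xs)"
  let ?c = "\<lambda>l. if l \<in> L then \<kappa>\<^sup>2 / 8 else 0"
  have report_affinity:
    "sqrt (p * q) + sqrt ((1 - p) * (1 - q)) \<le> 1 - ?c l"
    if "p = report_plus_prob \<sigma> \<epsilon> 1 l" and "q = report_plus_prob \<sigma> \<epsilon> (-1) l" for p q l
  proof -
    have "0 \<le> p" "p \<le> 1" "0 \<le> q" "q \<le> 1"
      using that report_plus_prob_bounds[OF assms(1,2)] by (auto intro: less_imp_le)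
    then have "sqrt (p * q) + sqrt ((1 - p) * (1 - q)) \<le> 1 - (p - q)\<^sup>2 / 8"
      by (rule bernoulli_affinity_le)
    also have "\<dots> \<le> 1 - ?c l"
    proof (cases "l \<in> L")
      case True
      then have "\<kappa>\<^sup>2 \<le> (p - q)\<^sup>2"
        using separated \<open>\<kappa> \<ge> 0\<close> that by (intro power_mono) auto
      then show ?thesis
        using True by simp
    qed simp
    finally show ?thesis .
  qed
  have "history_affinity \<sigma> \<epsilon> UNIV (Suc n) =
      (\<Sum>xs | length xs = n. ?w xs *
        (sqrt (report_plus_prob \<sigma> \<epsilon> 1 (public_llr \<sigma> \<epsilon> xs) * report_plus_prob \<sigma> \<epsilon> (-1) (public_llr \<sigma> \<epsilon> xs))
         + sqrt ((1 - report_plus_prob \<sigma> \<epsilon> 1 (public_llr \<sigma> \<epsilon> xs)) *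
                 (1 - report_plus_prob \<sigma> \<epsilon> (-1) (public_llr \<sigma> \<epsilon> xs)))))"
    unfolding history_affinity_UNIV sum_bool_lists_length_Suc pmf_history_snoc[OF assms(1,2)]
    by (intro sum.cong refl) (simp add: report_prob_def real_sqrt_mult[symmetric] distrib_left mult_ac)
  also have "\<dots> \<le> (\<Sum>xs | length xs = n. ?w xs * (1 - ?c (public_llr \<sigma> \<epsilon> xs)))"
    by (intro sum_mono mult_left_mono report_affinity) auto
  also have "\<dots> = history_affinity \<sigma> \<epsilon> UNIV n - \<kappa>\<^sup>2 / 8 * history_affinity \<sigma> \<epsilon> L n"
    unfolding history_affinity_UNIV history_affinity_restrict sum_distrib_left sum_subtractf[symmetric]
    by (intro sum.cong) (auto simp: algebra_simps)
  finally show ?thesis .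
qed

lemma summable_history_affinity:
  assumes "\<sigma> > 0" and "\<epsilon> > 0"
  shows "summable (history_affinity \<sigma> \<epsilon> {-M..M})"
proof -
  obtain \<kappa> where "\<kappa> > 0"
    and separated: "\<And>l. \<bar>l\<bar> \<le> M \<Longrightarrow> \<kappa> \<le> report_plus_prob \<sigma> \<epsilon> 1 l - report_plus_prob \<sigma> \<epsilon> (-1) l"
    using report_plus_prob_separated[OF assms] by blast
  let ?c = "\<kappa>\<^sup>2 / 8"
  have step: "history_affinity \<sigma> \<epsilon> UNIV (Suc n)
      \<le> history_affinity \<sigma> \<epsilon> UNIV n - ?c * history_affinity \<sigma> \<epsilon> {-M..M} n" for n
    using assms \<open>\<kappa> > 0\<close> separated by (intro history_affinity_Suc_le) auto
  have telescope: "?c * (\<Sum>k<N. history_affinity \<sigma> \<epsilon> {-M..M} k) \<le> 1 - history_affinity \<sigma> \<epsilon> UNIV N" for N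
  proof (induction N)
    case 0
    then show ?case
      by (simp add: history_affinity_0)
  next
    case (Suc N)
    then show ?case
      using step[of N] by (simp add: distrib_left)
  qed
  show ?thesis
  proof (rule bounded_imp_summable)
    fix N
    have "?c * (\<Sum>k<Suc N. history_affinity \<sigma> \<epsilon> {-M..M} k) \<le> 1"
      using telescope[of "Suc N"] history_affinity_nonneg[of \<sigma> \<epsilon> UNIV "Suc N"] by simp
    then show "(\<Sum>k\<le>N. history_affinity \<sigma> \<epsilon> {-M..M} k) \<le> 1 / ?c"
      using \<open>\<kappa> > 0\<close> by (simp add: lessThan_Suc_atMost field_simps)
  qed (rule history_affinity_nonneg)
qed

lemma history_affinity_tail_bound:
  assumes "\<sigma> > 0" and "\<epsilon> \<ge> 0"
  shows "history_affinity \<sigma> \<epsilon> UNIV n \<le> history_affinity \<sigma> \<epsilon> {-M..M} n + 2 * exp (- M / 2)"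
proof -
  let ?w = "\<lambda>\<theta> xs. pmf (history \<sigma> \<epsilon> \<theta> n) xs"
  have pointwise: "sqrt (?w 1 xs * ?w (-1) xs)
      \<le> (if public_llr \<sigma> \<epsilon> xs \<in> {-M..M} then sqrt (?w 1 xs * ?w (-1) xs) else 0)
        + exp (- M / 2) * (?w 1 xs + ?w (-1) xs)" for xs
  proof (cases "public_llr \<sigma> \<epsilon> xs \<in> {-M..M}")
    case False
    have "sqrt (?w 1 xs * ?w (-1) xs) \<le> exp (- \<bar>public_llr \<sigma> \<epsilon> xs\<bar> / 2) * (?w 1 xs + ?w (-1) xs)"
      by (intro sqrt_mult_le_exp_abs pmf_history_likelihood_ratio[OF assms]) simp
    also have "\<dots> \<le> exp (- M / 2) * (?w 1 xs + ?w (-1) xs)"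
      using False by (intro mult_right_mono) auto
    finally show ?thesis
      using False by simp
  qed simp
  have "history_affinity \<sigma> \<epsilon> UNIV n
      \<le> (\<Sum>xs | length xs = n.
            (if public_llr \<sigma> \<epsilon> xs \<in> {-M..M} then sqrt (?w 1 xs * ?w (-1) xs) else 0)
            + exp (- M / 2) * (?w 1 xs + ?w (-1) xs))"
    unfolding history_affinity_UNIV by (intro sum_mono pointwise)
  also have "\<dots> = history_affinity \<sigma> \<epsilon> {-M..M} n + 2 * exp (- M / 2)"
    by (simp add: history_affinity_restrict sum.distrib sum_distrib_left[symmetric] sum_pmf_history)
  finally show ?thesis .
qed

lemma history_affinity_tendsto_0:
  assumes "\<sigma> > 0" and "\<epsilon> > 0"
  shows "history_affinity \<sigma> \<epsilon> UNIV \<longlonglongrightarrow> 0"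
proof (rule order_tendstoI)
  fix r :: real
  assume "0 < r"
  define M where "M = 2 * ln (4 / r)"
  have tail: "2 * exp (- M / 2) = r / 2"
    using \<open>0 < r\<close> by (simp add: M_def exp_minus)
  have "eventually (\<lambda>n. history_affinity \<sigma> \<epsilon> {-M..M} n < r / 2) sequentially"
    using summable_LIMSEQ_zero[OF summable_history_affinity[OF assms]] \<open>0 < r\<close>
    by (intro order_tendstoD) auto
  then show "eventually (\<lambda>n. history_affinity \<sigma> \<epsilon> UNIV n < r) sequentially"
  proof (rule eventually_mono)
    fix n
    assume "history_affinity \<sigma> \<epsilon> {-M..M} n < r / 2"
    then show "history_affinity \<sigma> \<epsilon> UNIV n < r"
      using history_affinity_tail_bound[of \<sigma> \<epsilon> n M] assms tail by simp
  qed
next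
  fix r :: real
  assume "r < 0"
  then show "eventually (\<lambda>n. r < history_affinity \<sigma> \<epsilon> UNIV n) sequentially"
    using history_affinity_nonneg[of \<sigma> \<epsilon> UNIV]
    by (intro always_eventually allI) (auto intro: less_le_trans)
qed

section \<open>Error probability of the agents\<close>

lemma intended_iff_likelihood:
  assumes "\<sigma> > 0"
  shows "intended \<sigma> l s \<longleftrightarrow> normal_density (-1) \<sigma> s < exp l * normal_density 1 \<sigma> s"
proof -
  have "exp l * normal_density 1 \<sigma> s = exp (l + 2 * s / \<sigma>\<^sup>2) * normal_density (-1) \<sigma> s"
    by (simp add: normal_density_likelihood_ratio exp_add)
  moreover have "intended \<sigma> l s \<longleftrightarrow> 0 < l + 2 * s / \<sigma>\<^sup>2"
    unfolding intended_def thr_def using assms by (simp add: field_simps; linarith)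
  ultimately show ?thesis
    using normal_density_pos[OF assms, of "-1" s] by simp
qed

text \<open>At each signal the threshold rule errs on the state with the smaller weighted density, so
  the weighted error integrates a pointwise minimum.\<close>

lemma threshold_error_le:
  assumes "\<sigma> > 0"
  shows "exp l * measure (signal_dist \<sigma> 1) {s. \<not> intended \<sigma> l s}
           + measure (signal_dist \<sigma> (-1)) {s. intended \<sigma> l s} \<le> min (exp l) 1"
proof -
  let ?I = "{s. intended \<sigma> l s}"
  let ?f = "\<lambda>s. exp l * (normal_density 1 \<sigma> s * indicator (- ?I) s)
                + normal_density (-1) \<sigma> s * indicator ?I s"
  have [measurable]: "?I \<in> sets borel"
    unfolding intended_def by measurable
  have integrable: "integrable lborel (\<lambda>s. normal_density \<theta> \<sigma> s * indicator A s)"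
    if [measurable]: "A \<in> sets borel" for \<theta> A
    by (rule integrable_normal_density_times_bounded[OF assms]) auto
  have "exp l * measure (signal_dist \<sigma> 1) {s. \<not> intended \<sigma> l s}
      + measure (signal_dist \<sigma> (-1)) ?I = (\<integral>s. ?f s \<partial>lborel)"
    by (simp add: Collect_neg_eq measure_signal_dist[OF assms] integrable)
  also have "\<dots> \<le> min (exp l) 1"
  proof (intro min.boundedI)
    have "integrable lborel ?f"
      by (simp add: integrable)
    note selects = intended_iff_likelihood[OF assms, of l]
    have "(\<integral>s. ?f s \<partial>lborel) \<le> (\<integral>s. exp l * normal_density 1 \<sigma> s \<partial>lborel)"
      by (rule integral_mono) (use \<open>integrable lborel ?f\<close> assms in \<open>auto simp: indicator_def selects\<close>)
    then show "(\<integral>s. ?f s \<partial>lborel) \<le> exp l"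
      using assms by simp
    have "(\<integral>s. ?f s \<partial>lborel) \<le> (\<integral>s. normal_density (-1) \<sigma> s \<partial>lborel)"
      by (rule integral_mono) (use \<open>integrable lborel ?f\<close> assms in \<open>auto simp: indicator_def selects\<close>)
    then show "(\<integral>s. ?f s \<partial>lborel) \<le> 1"
      using assms by simp
  qed
  finally show ?thesis .
qed

lemma one_minus_prob_correct:
  assumes "\<sigma> > 0"
  shows "1 - prob_correct \<sigma> \<epsilon> n =
    (\<Sum>xs | length xs = n.
        pmf (history \<sigma> \<epsilon> 1 n) xs * measure (signal_dist \<sigma> 1) {s. \<not> intended \<sigma> (public_llr \<sigma> \<epsilon> xs) s}
      + pmf (history \<sigma> \<epsilon> (-1) n) xs * measure (signal_dist \<sigma> (-1)) {s. intended \<sigma> (public_llr \<sigma> \<epsilon> xs) s})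
    / 2"
proof -
  have compl: "measure (signal_dist \<sigma> \<theta>) {s. \<not> intended \<sigma> l s} = 1 - measure (signal_dist \<sigma> \<theta>) {s. intended \<sigma> l s}"
    for \<theta> l
  proof -
    interpret prob_space "signal_dist \<sigma> \<theta>"
      using assms by (rule prob_space_signal_dist)
    have "{s. intended \<sigma> l s} \<in> events"
      unfolding intended_def by measurable
    then show ?thesis
      using prob_compl[of "{s. intended \<sigma> l s}"] by (simp add: space_signal_dist Collect_neg_eq Compl_eq_Diff_UNIV)
  qed
  show ?thesis
    unfolding prob_correct_def expectation_history compl[of 1]
    by (simp add: compl[of "-1"] left_diff_distrib sum_subtractf sum_pmf_history sum.distrib
        field_simps mult.commute)
qed

lemma prob_correct_le_1:
  assumes "\<sigma> > 0"
  shows "prob_correct \<sigma> \<epsilon> n \<le> 1"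
proof -
  have "0 \<le> 1 - prob_correct \<sigma> \<epsilon> n"
    unfolding one_minus_prob_correct[OF assms] by (intro divide_nonneg_nonneg sum_nonneg) auto
  then show ?thesis
    by simp
qed

lemma prob_correct_ge_affinity:
  assumes "\<sigma> > 0" and "\<epsilon> \<ge> 0"
  shows "1 - history_affinity \<sigma> \<epsilon> UNIV n / 2 \<le> prob_correct \<sigma> \<epsilon> n"
proof -
  have "w1 * measure (signal_dist \<sigma> 1) {s. \<not> intended \<sigma> l s} + w * measure (signal_dist \<sigma> (-1)) {s. intended \<sigma> l s}
      \<le> sqrt (w1 * w)" if "0 \<le> w" and "w1 = exp l * w" for w1 w l
  proof -
    have "w1 * measure (signal_dist \<sigma> 1) {s. \<not> intended \<sigma> l s} + w * measure (signal_dist \<sigma> (-1)) {s. intended \<sigma> l s}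
        = w * (exp l * measure (signal_dist \<sigma> 1) {s. \<not> intended \<sigma> l s} + measure (signal_dist \<sigma> (-1)) {s. intended \<sigma> l s})"
      using that by (simp add: algebra_simps)
    also have "\<dots> \<le> w * min (exp l) 1"
      using threshold_error_le[OF assms(1)] that by (intro mult_left_mono) auto
    also have "\<dots> = min w1 w"
      using that by (simp add: min_mult_distrib_left mult.commute)
    also have "\<dots> \<le> sqrt (w1 * w)"
      using that by (intro min_le_sqrt_mult) auto
    finally show ?thesis .
  qed
  then have "1 - prob_correct \<sigma> \<epsilon> n \<le> history_affinity \<sigma> \<epsilon> UNIV n / 2"
    unfolding one_minus_prob_correct[OF assms(1)] history_affinity_UNIV
    by (intro divide_right_mono sum_mono) (simp_all add: pmf_history_likelihood_ratio[OF assms])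
  then show ?thesis
    by simp
qed

theorem theorem5:
  fixes \<sigma> \<epsilon> :: real
  assumes "\<sigma> > 0" and "\<epsilon> > 0"
  shows "(\<lambda>n. prob_correct \<sigma> \<epsilon> n) \<longlonglongrightarrow> 1"
proof (rule tendsto_sandwich)
  show "eventually (\<lambda>n. 1 - history_affinity \<sigma> \<epsilon> UNIV n / 2 \<le> prob_correct \<sigma> \<epsilon> n) sequentially"
    using assms by (intro always_eventually allI prob_correct_ge_affinity) auto
  show "eventually (\<lambda>n. prob_correct \<sigma> \<epsilon> n \<le> 1) sequentially"
    using assms by (intro always_eventually allI prob_correct_le_1)
  show "(\<lambda>n. 1 - history_affinity \<sigma> \<epsilon> UNIV n / 2) \<longlonglongrightarrow> 1"
    using tendsto_diff[OF tendsto_const tendsto_divide[OF history_affinity_tendsto_0[OF assms] tendsto_const]]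
    by simp
qed simp

end
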